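(* For every integer $n \ge 9$ of the form $n = 5k + 4$ with $k$ a positive integer, we have $\mathbf{car}(n, 3) \ge 4^{(n - 4)/5}$.
   Context: A partial deterministic finite (semi-)automaton (partial DFA) is a triple $\mathcal{A} = (Q, \Sigma, \delta)$ with $Q$ a finite set of states, $\Sigma$ a finite alphabet, and $\delta \colon Q \times \Sigma \rightharpoonup Q$ a partial transition function, extended to words $\delta\colon Q \times \Sigma^* \rightharpoonup Q$ in the usual way ($\delta(q,\varepsilon)=q$, $\delta(q, wa) = \delta(\delta(q,w),a)$, undefined if any step is undefined). A word $w \in \Sigma^*$ is carefully synchronising for $\mathcal{A}$ if there is a state $q \in Q$ such that $\delta(p, w)$ is defined and equals $q$ for every $p \in Q$. $\mathbf{car}(n, m)$ denotes the maximum, over all partial DFAs with $n$ states and $m$ letters that admit at least one carefully synchronising word, of the length of a shortest carefully synchronising word. *)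

theory Defs
  imports Main
begin

definition is_pdfa :: "nat \<Rightarrow> nat \<Rightarrow> (nat \<Rightarrow> nat \<Rightarrow> nat option) \<Rightarrow> bool" where
  "is_pdfa n m \<delta> \<longleftrightarrow>
     (\<forall>q a. (q < n \<and> a < m \<longrightarrow> (case \<delta> q a of None \<Rightarrow> True | Some p \<Rightarrow> p < n))
          \<and> (\<not> (q < n \<and> a < m) \<longrightarrow> \<delta> q a = None))"

fun delta_word :: "(nat \<Rightarrow> nat \<Rightarrow> nat option) \<Rightarrow> nat \<Rightarrow> nat list \<Rightarrow> nat option" where
  "delta_word \<delta> q [] = Some q"
| "delta_word \<delta> q (a # w) = (case \<delta> q a of None \<Rightarrow> None | Some p \<Rightarrow> delta_word \<delta> p w)"

definition carefully_sync :: "nat \<Rightarrow> nat \<Rightarrow> (nat \<Rightarrow> nat \<Rightarrow> nat option) \<Rightarrow> nat list \<Rightarrow> bool" where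
  "carefully_sync n m \<delta> w \<longleftrightarrow>
     set w \<subseteq> {..<m} \<and> (\<exists>q. \<forall>p<n. delta_word \<delta> p w = Some q)"

definition shortest_cs :: "nat \<Rightarrow> nat \<Rightarrow> (nat \<Rightarrow> nat \<Rightarrow> nat option) \<Rightarrow> nat" where
  "shortest_cs n m \<delta> = (LEAST l. \<exists>w. length w = l \<and> carefully_sync n m \<delta> w)"

definition car :: "nat \<Rightarrow> nat \<Rightarrow> nat" where
  "car n m = Sup {shortest_cs n m \<delta> | \<delta>. is_pdfa n m \<delta> \<and> (\<exists>w. carefully_sync n m \<delta> w)}"

end

theory Submission
  imports Defs
begin

(* The bound is witnessed by a three-letter automaton simulating an odometer. Its P cells form a
   cycle carrying a head (the state Cell z b) and P - 1 digits in base b. Letter 1 rotates the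
   cycle, letter 2 rotates it while incrementing the digit that passes from cell 1 to cell 0
   (a pending carry is the state Carry), and letter 0 resets everything to the configuration of
   value 0. Letter 1 is undefined on Carry and letter 2 on an ordinary digit in cell 0, so along
   a carefully synchronising word the image of the state set stays a configuration until the
   counter overflows, while the potential P * value + (P - 1 - head) grows by at most one per
   letter. Hence such a word has length at least P * b^(P-1) + 3; conversely, counting up to
   the overflow and then collapsing the cells one by one synchronises the automaton. *)

section \<open>Runs of partial automata on sets of states\<close>

fun run :: "('s \<Rightarrow> 'a \<Rightarrow> 's option) \<Rightarrow> 's \<Rightarrow> 'a list \<Rightarrow> 's option" where
  "run \<delta> x [] = Some x"
| "run \<delta> x (a # w) = Option.bind (\<delta> x a) (\<lambda>y. run \<delta> y w)"

lemma run_single [simp]: "run \<delta> x [a] = \<delta> x a"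
  by (cases "\<delta> x a") auto

lemma run_append: "run \<delta> x (u @ v) = Option.bind (run \<delta> x u) (\<lambda>y. run \<delta> y v)"
  by (induction u arbitrary: x) auto

lemma run_closed:
  assumes "\<And>x a y. x \<in> U \<Longrightarrow> \<delta> x a = Some y \<Longrightarrow> y \<in> U"
  shows "x \<in> U \<Longrightarrow> run \<delta> x w = Some y \<Longrightarrow> y \<in> U"
  by (induction w arbitrary: x) (auto simp: bind_eq_Some_conv intro: assms)

lemma run_letters:
  assumes "\<And>x a. \<delta> x a \<noteq> None \<Longrightarrow> a \<in> A"
  shows "run \<delta> x w \<noteq> None \<Longrightarrow> set w \<subseteq> A"
  by (induction w arbitrary: x) (auto simp: bind_eq_None_conv intro: assms)

definition maps_to :: "('s \<Rightarrow> 'a \<Rightarrow> 's option) \<Rightarrow> 's set \<Rightarrow> 'a list \<Rightarrow> 's set \<Rightarrow> bool" where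
  "maps_to \<delta> S w S' \<longleftrightarrow> (\<lambda>x. run \<delta> x w) ` S = Some ` S'"

definition reaches :: "('s \<Rightarrow> 'a \<Rightarrow> 's option) \<Rightarrow> 's set \<Rightarrow> 's set \<Rightarrow> bool" where
  "reaches \<delta> S S' \<longleftrightarrow> (\<exists>w. maps_to \<delta> S w S')"

lemma maps_to_Nil: "maps_to \<delta> S [] S"
  by (simp add: maps_to_def)

lemma maps_to_append:
  assumes "maps_to \<delta> S u S1" and "maps_to \<delta> S1 v S2"
  shows "maps_to \<delta> S (u @ v) S2"
proof -
  have "(\<lambda>x. run \<delta> x (u @ v)) ` S = (\<lambda>r. Option.bind r (\<lambda>y. run \<delta> y v)) ` (\<lambda>x. run \<delta> x u) ` S"
    by (simp add: run_append image_image)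
  also have "\<dots> = (\<lambda>y. run \<delta> y v) ` S1"
    using assms(1) by (simp add: maps_to_def image_image)
  finally show ?thesis
    using assms(2) by (simp add: maps_to_def)
qed

lemma maps_to_image:
  assumes "\<And>i. i \<in> A \<Longrightarrow> run \<delta> (f i) w = Some (g i)"
  shows "maps_to \<delta> (f ` A) w (g ` A)"
  using assms by (simp add: maps_to_def image_image)

lemma maps_to_insert:
  "run \<delta> x w = Some y \<Longrightarrow> maps_to \<delta> S w S' \<Longrightarrow> maps_to \<delta> (insert x S) w (insert y S')"
  by (simp add: maps_to_def)

lemma maps_to_run:
  assumes "maps_to \<delta> S u S'" and "\<forall>x\<in>S. run \<delta> x (u @ v) = Some y"
  shows "\<forall>x\<in>S'. run \<delta> x v = Some y"
proof
  fix x' assume "x' \<in> S'"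
  then have "Some x' \<in> (\<lambda>x. run \<delta> x u) ` S"
    using assms(1) by (simp add: maps_to_def)
  then obtain x where "x \<in> S" and "run \<delta> x u = Some x'"
    by auto
  moreover have "run \<delta> x (u @ v) = Some y"
    using assms(2) \<open>x \<in> S\<close> by blast
  ultimately show "run \<delta> x' v = Some y"
    by (simp add: run_append)
qed

lemma maps_to_singleton: "maps_to \<delta> S w {y} \<Longrightarrow> \<forall>x\<in>S. run \<delta> x w = Some y"
  by (auto simp: maps_to_def)

lemma reachesI: "maps_to \<delta> S w S' \<Longrightarrow> reaches \<delta> S S'"
  by (auto simp: reaches_def)

lemma reaches_refl: "reaches \<delta> S S"
  using maps_to_Nil by (rule reachesI)

lemma reaches_trans [trans]: "reaches \<delta> S S1 \<Longrightarrow> reaches \<delta> S1 S2 \<Longrightarrow> reaches \<delta> S S2"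
  unfolding reaches_def using maps_to_append by blast

section \<open>Lower bounds for car from abstract automata\<close>

lemma finite_pdfas: "finite {\<delta>. is_pdfa n m \<delta>}"
proof -
  let ?A = "{..<n} \<times> {..<m}"
  let ?S = "{f. \<forall>x. (x \<in> ?A \<longrightarrow> f x \<in> insert None (Some ` {..<n})) \<and> (x \<notin> ?A \<longrightarrow> f x = None)}"
  have "{\<delta>. is_pdfa n m \<delta>} \<subseteq> curry ` ?S"
  proof
    fix \<delta> assume "\<delta> \<in> {\<delta>. is_pdfa n m \<delta>}"
    then have "case_prod \<delta> \<in> ?S"
      unfolding is_pdfa_def by (fastforce split: option.splits prod.splits)
    then show "\<delta> \<in> curry ` ?S"
      by (rule image_eqI[rotated]) simp
  qed
  moreover have "finite ?S"
    by (rule finite_set_of_finite_funs) auto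
  ultimately show ?thesis
    by (rule finite_subset[OF _ finite_imageI])
qed

lemma car_ge_pdfa:
  assumes "is_pdfa n m \<delta>" and "carefully_sync n m \<delta> w"
    and "\<And>w. carefully_sync n m \<delta> w \<Longrightarrow> B \<le> length w"
  shows "B \<le> car n m"
proof -
  let ?X = "{shortest_cs n m \<delta> | \<delta>. is_pdfa n m \<delta> \<and> (\<exists>w. carefully_sync n m \<delta> w)}"
  have "finite ?X"
    by (rule finite_subset[OF _ finite_imageI[OF finite_pdfas]]) blast
  have "B \<le> shortest_cs n m \<delta>"
    unfolding shortest_cs_def by (rule LeastI2_ex[where Q = "(\<le>) B"]) (use assms(2,3) in auto)
  also have "\<dots> \<le> Sup ?X"
    using assms(1,2) \<open>finite ?X\<close> by (intro cSup_upper bdd_above_finite) auto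
  finally show ?thesis
    unfolding car_def .
qed

definition numbered :: "'s set \<Rightarrow> ('s \<Rightarrow> nat) \<Rightarrow> ('s \<Rightarrow> nat \<Rightarrow> 's option) \<Rightarrow> nat \<Rightarrow> nat \<Rightarrow>
    nat \<Rightarrow> nat \<Rightarrow> nat option" where
  "numbered U h \<delta> n m q a = (if q < n \<and> a < m then map_option h (\<delta> (inv_into U h q) a) else None)"

lemma is_pdfa_numbered:
  assumes h: "bij_betw h U {..<n}" and closed: "\<And>x a y. x \<in> U \<Longrightarrow> \<delta> x a = Some y \<Longrightarrow> y \<in> U"
  shows "is_pdfa n m (numbered U h \<delta> n m)"
proof -
  have "q < n \<Longrightarrow> inv_into U h q \<in> U" and "x \<in> U \<Longrightarrow> h x < n" for q x
    using h by (auto simp: bij_betw_def inv_into_into)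
  then show ?thesis
    unfolding is_pdfa_def numbered_def by (auto split: option.split) (meson closed)
qed

lemma delta_word_numbered:
  assumes h: "bij_betw h U {..<n}" and closed: "\<And>x a y. x \<in> U \<Longrightarrow> \<delta> x a = Some y \<Longrightarrow> y \<in> U"
  shows "x \<in> U \<Longrightarrow> set w \<subseteq> {..<m} \<Longrightarrow>
    delta_word (numbered U h \<delta> n m) (h x) w = map_option h (run \<delta> x w)"
proof (induction w arbitrary: x)
  case (Cons a w)
  have "numbered U h \<delta> n m (h x) a = map_option h (\<delta> x a)"
    using Cons.prems h by (auto simp: numbered_def bij_betw_def)
  then show ?case
    using Cons closed by (cases "\<delta> x a") auto
qed simp

lemma car_ge_model:
  fixes \<delta> :: "'s \<Rightarrow> nat \<Rightarrow> 's option"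
  assumes "finite U" and "card U = n" and "x0 \<in> U"
    and closed: "\<And>x a y. x \<in> U \<Longrightarrow> \<delta> x a = Some y \<Longrightarrow> y \<in> U"
    and letters: "\<And>x a. \<delta> x a \<noteq> None \<Longrightarrow> a < m"
    and sync: "\<forall>x\<in>U. run \<delta> x w0 = Some y0"
    and bound: "\<And>w y. \<forall>x\<in>U. run \<delta> x w = Some y \<Longrightarrow> B \<le> length w"
  shows "B \<le> car n m"
proof -
  obtain h where h: "bij_betw h U {..<n}"
    using ex_bij_betw_finite_nat[OF \<open>finite U\<close>] \<open>card U = n\<close> atLeast0LessThan by metis
  let ?\<delta> = "numbered U h \<delta> n m"
  have pdfa: "is_pdfa n m ?\<delta>"
    using h closed by (rule is_pdfa_numbered)
  have encode: "x \<in> U \<Longrightarrow> set w \<subseteq> {..<m} \<Longrightarrow> delta_word ?\<delta> (h x) w = map_option h (run \<delta> x w)"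
    for x w
    using h closed by (rule delta_word_numbered)
  have "run \<delta> x0 w0 \<noteq> None"
    using sync \<open>x0 \<in> U\<close> by simp
  then have "set w0 \<subseteq> {..<m}"
    using run_letters[of \<delta> "{..<m}" x0 w0] letters by blast
  moreover have "delta_word ?\<delta> p w0 = Some (h y0)" if "p < n" for p
    using encode[OF _ \<open>set w0 \<subseteq> {..<m}\<close>, of "inv_into U h p"] sync that h
    by (auto simp: bij_betw_def f_inv_into_f inv_into_into)
  ultimately have "carefully_sync n m ?\<delta> w0"
    by (auto simp: carefully_sync_def)
  moreover have "B \<le> length w" if cs: "carefully_sync n m ?\<delta> w" for w
  proof -
    obtain q where w: "set w \<subseteq> {..<m}" and q: "\<forall>p<n. delta_word ?\<delta> p w = Some q"
      using cs by (auto simp: carefully_sync_def)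
    have "run \<delta> x w = Some (inv_into U h q)" if "x \<in> U" for x
    proof -
      have "h x < n"
        using h \<open>x \<in> U\<close> by (auto simp: bij_betw_def)
      then have "map_option h (run \<delta> x w) = Some q"
        using q encode[OF \<open>x \<in> U\<close> w] by simp
      then obtain y where y: "run \<delta> x w = Some y" "h y = q"
        by blast
      have "y \<in> U"
        using closed \<open>x \<in> U\<close> y(1) by (rule run_closed)
      then show ?thesis
        using y h by (auto simp: bij_betw_def)
    qed
    then show ?thesis
      using bound by blast
  qed
  ultimately show ?thesis
    using car_ge_pdfa[OF pdfa] by blast
qed

section \<open>The odometer automaton\<close>

definition base_value :: "nat \<Rightarrow> nat \<Rightarrow> (nat \<Rightarrow> nat) \<Rightarrow> nat" where
  "base_value b n d = (\<Sum>j<n. d j * b ^ j)"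

definition propagate_carry :: "nat \<Rightarrow> (nat \<Rightarrow> nat) \<Rightarrow> nat \<Rightarrow> nat" where
  "propagate_carry j d = d(j := 0, Suc j := Suc (d (Suc j)))"

definition bump :: "nat \<Rightarrow> (nat \<Rightarrow> nat) \<Rightarrow> nat \<Rightarrow> nat" where
  "bump i d j = (if j < i then 0 else if j = i then Suc (d i) else d j)"

lemma bump_0: "bump 0 d = d(0 := Suc (d 0))"
  by (auto simp: bump_def)

lemma propagate_carry_bump: "propagate_carry i (bump i d) = bump (Suc i) d"
  by (auto simp: propagate_carry_def bump_def)

lemma base_value_update:
  assumes "j < n"
  shows "base_value b n (d(j := x)) + d j * b ^ j = base_value b n d + x * b ^ j"
proof -
  have split: "base_value b n e = e j * b ^ j + (\<Sum>i\<in>{..<n} - {j}. e i * b ^ i)" for e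
    unfolding base_value_def using assms by (simp add: sum.remove)
  have "(\<Sum>i\<in>{..<n} - {j}. (d(j := x)) i * b ^ i) = (\<Sum>i\<in>{..<n} - {j}. d i * b ^ i)"
    by (rule sum.cong) auto
  then show ?thesis
    using split[of "d(j := x)"] split[of d] by simp
qed

lemma base_value_carry:
  assumes "Suc j < n" and "d j = b"
  shows "base_value b n (propagate_carry j d) = base_value b n d"
proof -
  have "base_value b n (d(j := 0)) + b ^ Suc j = base_value b n d"
    using base_value_update[of j n b d 0] assms by simp
  moreover have "base_value b n (propagate_carry j d) + d (Suc j) * b ^ Suc j
      = base_value b n (d(j := 0)) + Suc (d (Suc j)) * b ^ Suc j"
    using base_value_update[of "Suc j" n b "d(j := 0)" "Suc (d (Suc j))"] assms
    by (simp add: propagate_carry_def)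
  ultimately show ?thesis
    by simp
qed

lemma digit_le_base_value: "j < n \<Longrightarrow> d j * b ^ j \<le> base_value b n d"
  unfolding base_value_def by (rule member_le_sum) auto

(* Pad states only bring the number of states up to the required n. *)
datatype cstate = Cell nat nat | Carry | Idle | Pad nat

locale odometer =
  fixes b P pad :: nat
  assumes base_ge_2: "2 \<le> b" and cells_ge_2: "2 \<le> P"
begin

definition cyc_pred :: "nat \<Rightarrow> nat" where
  "cyc_pred p = (if p = 0 then P - 1 else p - 1)"

definition reset_state :: "nat \<Rightarrow> cstate" where
  "reset_state p = (if p = 1 then Cell 1 b else Cell p 0)"

fun step :: "cstate \<Rightarrow> nat \<Rightarrow> cstate option" where
  "step (Cell p s) a =
     (if a = 0 then Some (reset_state p)
      else if a = 1 then Some (Cell (cyc_pred p) s)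
      else if a = 2 then
        (if p = 0 then (if s = b then Some (Cell (P - 1) b) else None)
         else if p = 1 then
           (if s = b then Some Idle else if Suc s < b then Some (Cell 0 (Suc s)) else Some Carry)
         else Some (Cell (p - 1) s))
      else None)"
| "step Carry a = (if a = 0 then Some (reset_state 0) else if a = 2 then Some (Cell (P - 1) 0) else None)"
| "step Idle a = (if a = 0 then Some (reset_state 1) else if a < 3 then Some Idle else None)"
| "step (Pad i) a = (if a = 0 then Some (reset_state 1) else None)"

definition states :: "cstate set" where
  "states = case_prod Cell ` ({..<P} \<times> {..b}) \<union> {Carry, Idle} \<union> Pad ` {..<pad}"

lemma card_states: "card states = P * (b + 1) + 2 + pad"
proof -
  have "card (case_prod Cell ` ({..<P} \<times> {..b})) = P * (b + 1)"
    by (simp add: card_image inj_on_def card_cartesian_product)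
  then have "card (case_prod Cell ` ({..<P} \<times> {..b}) \<union> {Carry, Idle}) = P * (b + 1) + 2"
    by (subst card_Un_disjoint) auto
  moreover have "card (Pad ` {..<pad}) = pad"
    by (simp add: card_image inj_on_def)
  ultimately show ?thesis
    unfolding states_def by (subst card_Un_disjoint) auto
qed

lemma in_states [simp]:
  "Cell p s \<in> states \<longleftrightarrow> p < P \<and> s \<le> b"
  "Carry \<in> states" "Idle \<in> states"
  "Pad i \<in> states \<longleftrightarrow> i < pad"
  by (auto simp: states_def)

lemma cyc_pred_less: "p < P \<Longrightarrow> cyc_pred p < P"
  using cells_ge_2 by (auto simp: cyc_pred_def)

lemma reset_state_in_states: "p < P \<Longrightarrow> reset_state p \<in> states"
  using cells_ge_2 by (simp add: reset_state_def)

lemma step_states: "x \<in> states \<Longrightarrow> step x a = Some y \<Longrightarrow> y \<in> states"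
proof (induction x a rule: step.induct)
  case (1 p s a)
  then show ?case
    using cells_ge_2 reset_state_in_states cyc_pred_less by (auto split: if_splits)
qed (use cells_ge_2 reset_state_in_states in \<open>auto split: if_splits\<close>)

lemma step_letters: "step x a \<noteq> None \<Longrightarrow> a < 3"
  by (cases x) (auto split: if_splits)

(* In configuration (z, d) the head is in cell z and digit j in cell cell_of z j, the cells after
   z in cyclic order (meaningful for z < P and j < P - 1); a digit equal to b is a pending carry,
   represented by Carry, and is only allowed in cell 0. *)

definition cell_of :: "nat \<Rightarrow> nat \<Rightarrow> nat" where
  "cell_of z j = (if z + 1 + j < P then z + 1 + j else z + 1 + j - P)"

definition digit_state :: "nat \<Rightarrow> (nat \<Rightarrow> nat) \<Rightarrow> nat \<Rightarrow> cstate" where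
  "digit_state z d j = (if d j = b then Carry else Cell (cell_of z j) (d j))"

definition config :: "nat \<Rightarrow> (nat \<Rightarrow> nat) \<Rightarrow> cstate set" where
  "config z d = insert (Cell z b) (digit_state z d ` {..<P - 1})"

definition valid_config :: "nat \<Rightarrow> (nat \<Rightarrow> nat) \<Rightarrow> bool" where
  "valid_config z d \<longleftrightarrow> z < P \<and> (\<forall>j<P - 1. d j \<le> b \<and> (d j = b \<longrightarrow> cell_of z j = 0))"

(* The maximum with P - 2, the potential after a reset, lets every letter raise it by at most one. *)
definition potential :: "nat \<Rightarrow> (nat \<Rightarrow> nat) \<Rightarrow> nat" where
  "potential z d = max (P * base_value b (P - 1) d + (P - 1 - z)) (P - 2)"

lemma valid_config_less: "valid_config z d \<Longrightarrow> z < P"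
  by (simp add: valid_config_def)

lemma cell_of_image: "z < P \<Longrightarrow> insert z (cell_of z ` {..<P - 1}) = {..<P}"
proof (intro equalityI subsetI)
  fix p assume "z < P" and "p \<in> {..<P}"
  then have "p = z \<or> p = cell_of z (if z < p then p - z - 1 else p + P - z - 1)"
    by (auto simp: cell_of_def)
  then show "p \<in> insert z (cell_of z ` {..<P - 1})"
    using \<open>z < P\<close> \<open>p \<in> {..<P}\<close> by (cases "z < p") auto
qed (auto simp: cell_of_def)

lemma cell_of_cyc_pred: "z < P \<Longrightarrow> j < P - 1 \<Longrightarrow> cell_of (cyc_pred z) j = cyc_pred (cell_of z j)"
  by (auto simp: cell_of_def cyc_pred_def)

lemma valid_digit_lt:
  assumes "valid_config z d" and "j < P - 1" and "j \<noteq> P - 1 - z \<or> z = 0"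
  shows "d j < b"
proof -
  have "d j \<le> b" and "d j = b \<longrightarrow> cell_of z j = 0" and "z < P"
    using assms(1,2) by (auto simp: valid_config_def)
  moreover have "cell_of z j \<noteq> 0"
    using assms(2,3) \<open>z < P\<close> by (auto simp: cell_of_def)
  ultimately show ?thesis
    by auto
qed

lemma valid_config_0: "valid_config 0 d \<longleftrightarrow> (\<forall>j<P - 1. d j < b)"
  using cells_ge_2 by (auto simp: valid_config_def cell_of_def le_less)

lemma config_not_singleton:
  assumes "valid_config z d"
  shows "\<not> (\<forall>x\<in>config z d. x = y)"
proof -
  have "digit_state z d 0 \<in> config z d" and "Cell z b \<in> config z d"
    using cells_ge_2 by (auto simp: config_def)
  moreover have "digit_state z d 0 \<noteq> Cell z b"
    using assms by (auto simp: digit_state_def cell_of_def valid_config_def)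
  ultimately show ?thesis
    by metis
qed

lemma carry_in_config: "j < P - 1 \<Longrightarrow> d j = b \<Longrightarrow> Carry \<in> config z d"
  unfolding config_def digit_state_def by (auto intro: rev_image_eqI)

lemma reset_state_image:
  "z < P \<Longrightarrow> insert (reset_state z) ((\<lambda>j. reset_state (cell_of z j)) ` {..<P - 1}) = reset_state ` {..<P}"
  using cell_of_image[of z] by (metis image_image image_insert)

lemma config_initial: "config 1 (\<lambda>_. 0) = reset_state ` {..<P}"
proof -
  have "digit_state 1 (\<lambda>_. 0) ` {..<P - 1} = (\<lambda>j. reset_state (cell_of 1 j)) ` {..<P - 1}"
    using base_ge_2 by (intro image_cong) (auto simp: digit_state_def reset_state_def cell_of_def)
  then have "config 1 (\<lambda>_. 0) = insert (reset_state 1) ((\<lambda>j. reset_state (cell_of 1 j)) ` {..<P - 1})"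
    unfolding config_def reset_state_def[of 1] by simp
  then show ?thesis
    using reset_state_image[of 1] cells_ge_2 by simp
qed

lemma valid_initial: "valid_config 1 (\<lambda>_. 0)"
  using cells_ge_2 base_ge_2 by (simp add: valid_config_def)

lemma potential_initial: "potential 1 (\<lambda>_. 0) = P - 2"
  by (simp add: potential_def base_value_def)

lemma maps_to_reset: "valid_config z d \<Longrightarrow> maps_to step (config z d) [0] (config 1 (\<lambda>_. 0))"
proof -
  assume v: "valid_config z d"
  have "maps_to step (config z d) [0] (insert (reset_state z) ((\<lambda>j. reset_state (cell_of z j)) ` {..<P - 1}))"
    unfolding config_def
  proof (rule maps_to_insert)
    show "maps_to step (digit_state z d ` {..<P - 1}) [0] ((\<lambda>j. reset_state (cell_of z j)) ` {..<P - 1})"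
      by (rule maps_to_image) (use v in \<open>auto simp: digit_state_def valid_config_def\<close>)
  qed simp
  then show ?thesis
    using reset_state_image v config_initial by (simp add: valid_config_def)
qed

lemma maps_to_reset_states: "maps_to step states [0] (config 1 (\<lambda>_. 0))"
proof -
  have "(\<lambda>x. step x 0) ` states = Some ` reset_state ` {..<P}"
  proof (intro equalityI subsetI)
    fix r assume "r \<in> (\<lambda>x. step x 0) ` states"
    then show "r \<in> Some ` reset_state ` {..<P}"
      using cells_ge_2 by (auto simp: states_def)
  next
    fix r assume "r \<in> Some ` reset_state ` {..<P}"
    then obtain p where "p < P" and "r = step (Cell p 0) 0"
      by auto
    then show "r \<in> (\<lambda>x. step x 0) ` states"
      by (intro rev_image_eqI[of "Cell p 0"]) auto
  qed
  then show ?thesis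
    unfolding maps_to_def config_initial by simp
qed

lemma maps_to_rotate:
  assumes "valid_config z d" and "\<forall>j<P - 1. d j \<noteq> b"
  shows "maps_to step (config z d) [1] (config (cyc_pred z) d)"
  unfolding config_def
proof (rule maps_to_insert)
  show "maps_to step (digit_state z d ` {..<P - 1}) [1] (digit_state (cyc_pred z) d ` {..<P - 1})"
    by (rule maps_to_image)
      (use assms in \<open>auto simp: digit_state_def valid_config_def cell_of_cyc_pred\<close>)
qed simp

lemma valid_rotate: "valid_config z d \<Longrightarrow> \<forall>j<P - 1. d j \<noteq> b \<Longrightarrow> valid_config (cyc_pred z) d"
  by (auto simp: valid_config_def cyc_pred_less)

lemma potential_rotate: "z < P \<Longrightarrow> potential (cyc_pred z) d \<le> Suc (potential z d)"
  by (auto simp: potential_def cyc_pred_def)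

lemma maps_to_increment:
  assumes "valid_config 0 d"
  shows "maps_to step (config 0 d) [2] (config (P - 1) (d(0 := Suc (d 0))))"
  unfolding config_def
proof (rule maps_to_insert)
  have "step (digit_state 0 d j) 2 = Some (digit_state (P - 1) (d(0 := Suc (d 0))) j)"
    if "j < P - 1" for j
  proof -
    have "d j < b" and "d 0 < b"
      using assms that by (simp_all add: valid_config_0)
    then show ?thesis
      using that by (auto simp: digit_state_def cell_of_def)
  qed
  then show "maps_to step (digit_state 0 d ` {..<P - 1}) [2]
      (digit_state (P - 1) (d(0 := Suc (d 0))) ` {..<P - 1})"
    by (intro maps_to_image) simp
qed simp

lemma valid_increment:
  assumes "valid_config 0 d"
  shows "valid_config (P - 1) (d(0 := Suc (d 0)))"
  unfolding valid_config_def
proof (intro conjI allI impI)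
  fix j assume j: "j < P - 1"
  have lt: "\<forall>j<P - 1. d j < b"
    using assms by (simp add: valid_config_0)
  then show "(d(0 := Suc (d 0))) j \<le> b"
    using j by (cases "j = 0") (auto simp: Suc_le_eq less_imp_le)
  assume "(d(0 := Suc (d 0))) j = b"
  then have "j = 0"
    using lt j by (metis fun_upd_other less_irrefl)
  then show "cell_of (P - 1) j = 0"
    using cells_ge_2 by (simp add: cell_of_def)
qed (use cells_ge_2 in simp)

lemma potential_increment: "potential (P - 1) (d(0 := Suc (d 0))) \<le> Suc (potential 0 d)"
  using base_value_update[of 0 "P - 1" b d "Suc (d 0)"] cells_ge_2 by (simp add: potential_def)

lemma maps_to_carry:
  assumes v: "valid_config z d" and z: "2 \<le> z" and carry: "d (P - 1 - z) = b"
  shows "maps_to step (config z d) [2] (config (z - 1) (propagate_carry (P - 1 - z) d))"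
  unfolding config_def
proof (rule maps_to_insert)
  have "z < P"
    using v by (rule valid_config_less)
  have "step (digit_state z d j) 2 = Some (digit_state (z - 1) (propagate_carry (P - 1 - z) d) j)"
    if "j < P - 1" for j
  proof -
    consider "j = P - 1 - z" | "j = P - z" | "j \<noteq> P - 1 - z" "j \<noteq> P - z"
      by blast
    then show ?thesis
    proof cases
      case 1
      then show ?thesis
        using carry base_ge_2 z \<open>z < P\<close>
        by (auto simp: digit_state_def cell_of_def propagate_carry_def)
    next
      case 2
      then have "d j < b"
        using valid_digit_lt[OF v that] z \<open>z < P\<close> by auto
      then show ?thesis
        using 2 z \<open>z < P\<close>
        by (auto simp: digit_state_def cell_of_def propagate_carry_def Suc_diff_Suc)
    next
      case 3
      then have "d j < b"
        using valid_digit_lt[OF v that] by auto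
      then show ?thesis
        using 3 z \<open>z < P\<close> that
        by (auto simp: digit_state_def cell_of_def propagate_carry_def Suc_diff_Suc)
    qed
  qed
  then show "maps_to step (digit_state z d ` {..<P - 1}) [2]
      (digit_state (z - 1) (propagate_carry (P - 1 - z) d) ` {..<P - 1})"
    by (intro maps_to_image) simp
qed (use z in simp)

lemma valid_carry:
  assumes v: "valid_config z d" and z: "2 \<le> z" and carry: "d (P - 1 - z) = b"
  shows "valid_config (z - 1) (propagate_carry (P - 1 - z) d)"
proof -
  have "z < P"
    using v by (rule valid_config_less)
  have "d j < b" if "j < P - 1" "j \<noteq> P - 1 - z" for j
    using valid_digit_lt[OF v] that by blast
  moreover have "\<forall>j<P - 1. d j \<le> b"
    using v by (simp add: valid_config_def)
  ultimately show ?thesis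
    using z \<open>z < P\<close> base_ge_2
    by (auto simp: valid_config_def propagate_carry_def cell_of_def Suc_le_eq Suc_diff_Suc)
qed

lemma potential_carry:
  assumes "valid_config z d" and "2 \<le> z" and "d (P - 1 - z) = b"
  shows "potential (z - 1) (propagate_carry (P - 1 - z) d) \<le> Suc (potential z d)"
proof -
  have "z < P"
    using assms(1) by (rule valid_config_less)
  then have value_eq: "base_value b (P - 1) (propagate_carry (P - 1 - z) d) = base_value b (P - 1) d"
    using assms(2,3) by (intro base_value_carry) auto
  show ?thesis
    unfolding potential_def value_eq using \<open>z < P\<close> assms(2) by linarith
qed

lemma increment_blocked:
  assumes "valid_config z d" and "z \<noteq> 0" and "d (P - 1 - z) \<noteq> b"
  shows "\<exists>x\<in>config z d. step x 2 = None"
proof -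
  have "z < P"
    using assms(1) by (rule valid_config_less)
  then have "digit_state z d (P - 1 - z) \<in> config z d"
    using assms(2) by (simp add: config_def)
  moreover have "step (digit_state z d (P - 1 - z)) 2 = None"
    using assms \<open>z < P\<close> by (simp add: digit_state_def cell_of_def)
  ultimately show ?thesis
    by blast
qed

lemma potential_overflow:
  assumes "d (P - 2) = b"
  shows "P * b ^ (P - 1) + (P - 2) \<le> potential 1 d"
proof -
  have "P - 1 = Suc (P - 2)"
    using cells_ge_2 by simp
  then have "b ^ (P - 1) = d (P - 2) * b ^ (P - 2)"
    using assms by simp
  also have "\<dots> \<le> base_value b (P - 1) d"
    using cells_ge_2 by (intro digit_le_base_value) simp
  finally show ?thesis
    by (simp add: potential_def numeral_2_eq_2)
qed

section \<open>Carefully synchronising words are long\<close>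

lemma increment_step:
  assumes v: "valid_config z d" and defined: "\<forall>x\<in>config z d. step x 2 \<noteq> None"
    and no_overflow: "z = 1 \<Longrightarrow> d (P - 2) \<noteq> b"
  obtains z' d' where "valid_config z' d'"
    and "maps_to step (config z d) [2] (config z' d')" and "potential z' d' \<le> Suc (potential z d)"
proof (cases "z = 0")
  case True
  then have "valid_config 0 d"
    using v by simp
  then show thesis
    using that[unfolded True] valid_increment maps_to_increment potential_increment by blast
next
  case False
  then have carry: "d (P - 1 - z) = b"
    using increment_blocked[OF v] defined by blast
  with False no_overflow have "2 \<le> z"
    by (cases "z = 1") (auto simp: numeral_2_eq_2)
  then show thesis
    using that valid_carry maps_to_carry potential_carry v carry by blast
qed

lemma overflow_not_final:
  assumes "d (P - 2) = b"
  shows "\<not> (\<forall>x\<in>config 1 d. run step x [2] = Some y)"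
proof -
  have carry: "Carry \<in> config 1 d" and head: "Cell 1 b \<in> config 1 d"
    using assms carry_in_config[of "P - 2"] cells_ge_2 by (auto simp: config_def)
  show ?thesis
  proof
    assume all: "\<forall>x\<in>config 1 d. run step x [2] = Some y"
    then have "run step Carry [2] = Some y" and "run step (Cell 1 b) [2] = Some y"
      using carry head by blast+
    then show False
      by simp
  qed
qed

lemma config_step_cases:
  assumes v: "valid_config z d" and defined: "\<forall>x\<in>config z d. step x a \<noteq> None"
  obtains (advance) z' d' where "valid_config z' d'"
      and "maps_to step (config z d) [a] (config z' d')" and "potential z' d' \<le> Suc (potential z d)"
    | (overflow) "a = 2" and "z = 1" and "d (P - 2) = b"
proof -
  consider "a = 0" | "a = 1" | "a = 2" | "3 \<le> a"
    by linarith
  then show thesis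
  proof cases
    case 1
    have "potential 1 (\<lambda>_. 0) \<le> Suc (potential z d)"
      unfolding potential_initial by (simp add: potential_def)
    with 1 show thesis
      using advance[OF valid_initial] maps_to_reset[OF v] by simp
  next
    case 2
    have no_carry: "\<forall>j<P - 1. d j \<noteq> b"
    proof (intro allI impI notI)
      fix j assume "j < P - 1" and "d j = b"
      then have "Carry \<in> config z d"
        by (rule carry_in_config)
      then show False
        using defined 2 by force
    qed
    with 2 show thesis
      using advance[OF valid_rotate[OF v no_carry] _ potential_rotate[OF valid_config_less[OF v]]]
        maps_to_rotate[OF v no_carry] by simp
  next
    case 3
    then show thesis
      using increment_step[OF v] defined advance overflow by blast
  next
    case 4
    have "Cell z b \<in> config z d"
      by (simp add: config_def)
    then show thesis
      using defined step_letters 4 by force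
  qed
qed

lemma sync_config_length:
  assumes "valid_config z d" and "\<forall>x\<in>config z d. run step x w = Some y"
  shows "P * b ^ (P - 1) + P \<le> length w + potential z d"
  using assms
proof (induction w arbitrary: z d)
  case Nil
  then show ?case
    using config_not_singleton by simp
next
  case (Cons a w)
  have "\<forall>x\<in>config z d. step x a \<noteq> None"
    using Cons.prems(2) by (auto simp: bind_eq_Some_conv)
  then show ?case
  proof (rule config_step_cases[OF Cons.prems(1)])
    fix z' d'
    assume "valid_config z' d'" and "maps_to step (config z d) [a] (config z' d')"
      and "potential z' d' \<le> Suc (potential z d)"
    moreover have "\<forall>x\<in>config z' d'. run step x w = Some y"
      using maps_to_run[OF calculation(2)] Cons.prems(2) by simp
    ultimately show ?thesis
      using Cons.IH by fastforce
  next
    assume overflow: "a = 2" "z = 1" "d (P - 2) = b"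
    then have "w \<noteq> []"
      using overflow_not_final[of d y] Cons.prems(2) by auto
    then show ?thesis
      using potential_overflow[of d] overflow by (cases w) auto
  qed
qed

lemma sync_states_length:
  assumes sync: "\<forall>x\<in>states. run step x w = Some y"
  shows "P * b ^ (P - 1) + 3 \<le> length w"
proof (cases w)
  case Nil
  then show ?thesis
    using sync[rule_format, of Carry] sync[rule_format, of Idle] by simp
next
  case (Cons a w')
  have "a = 0"
  proof (rule ccontr)
    assume "a \<noteq> 0"
    have "run step Carry (a # w') = Some y" and "run step (Cell 0 0) (a # w') = Some y"
      using sync cells_ge_2 unfolding Cons by (auto simp del: run.simps)
    then have "step Carry a \<noteq> None" and "step (Cell 0 0) a \<noteq> None"
      by (auto simp del: step.simps simp: bind_eq_Some_conv)
    moreover have "a = 2"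
      using calculation(1) \<open>a \<noteq> 0\<close> by (simp split: if_splits)
    ultimately show False
      using base_ge_2 by simp
  qed
  then have "\<forall>x\<in>config 1 (\<lambda>_. 0). run step x w' = Some y"
    using maps_to_run[OF maps_to_reset_states] sync Cons by simp
  then show ?thesis
    using sync_config_length[OF valid_initial] potential_initial Cons cells_ge_2 by fastforce
qed

section \<open>Counting up to the overflow synchronises\<close>

lemma reaches_rotate_home:
  assumes "valid_config z d" and "\<forall>j<P - 1. d j \<noteq> b"
  shows "reaches step (config z d) (config 0 d)"
  using assms
proof (induction z)
  case 0
  show ?case
    by (rule reaches_refl)
next
  case (Suc z)
  have "cyc_pred (Suc z) = z"
    by (simp add: cyc_pred_def)
  then have "reaches step (config (Suc z) d) (config z d)" and "valid_config z d"
    using maps_to_rotate[OF Suc.prems] valid_rotate[OF Suc.prems] by (auto intro: reachesI)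
  then show ?case
    using Suc.IH Suc.prems(2) reaches_trans by blast
qed

lemma reaches_carry_chain:
  assumes "i \<le> P - 2" and "\<forall>j<i. d j = b - 1" and "valid_config 0 d"
  shows "reaches step (config 0 d) (config (P - 1 - i) (bump i d)) \<and> valid_config (P - 1 - i) (bump i d)"
  using assms
proof (induction i)
  case 0
  then have "valid_config 0 d"
    by simp
  then show ?case
    unfolding bump_0 diff_zero by (blast intro: reachesI maps_to_increment valid_increment)
next
  case (Suc i)
  let ?z = "P - 1 - i"
  have IH: "reaches step (config 0 d) (config ?z (bump i d))" "valid_config ?z (bump i d)"
    using Suc by auto
  have z: "2 \<le> ?z"
    using Suc.prems(1) by simp
  have carry: "bump i d (P - 1 - ?z) = b"
    using Suc.prems(2) base_ge_2 z by (simp add: bump_def)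
  have eq: "P - 1 - ?z = i" "?z - 1 = P - 1 - Suc i"
    using z by auto
  show ?case
    using maps_to_carry[OF IH(2) z carry] valid_carry[OF IH(2) z carry] IH(1)
    unfolding eq propagate_carry_bump by (blast intro: reaches_trans reachesI)
qed

lemma reaches_bump:
  assumes "j0 < P - 1" and "\<forall>j<j0. d j = b - 1" and "d j0 < b - 1" and "valid_config 0 d"
  shows "reaches step (config 0 d) (config 0 (bump j0 d))"
proof -
  have chain: "reaches step (config 0 d) (config (P - 1 - j0) (bump j0 d))"
    and "valid_config (P - 1 - j0) (bump j0 d)"
    using reaches_carry_chain[of j0 d] assms by auto
  moreover have "\<forall>j<P - 1. bump j0 d j \<noteq> b"
    using assms(3,4) base_ge_2 by (auto simp: bump_def valid_config_0)
  ultimately show ?thesis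
    using reaches_rotate_home reaches_trans by blast
qed

lemma reaches_count_up:
  assumes "m \<le> P - 1" and "valid_config 0 d" and "\<forall>j<m. d j = 0"
  shows "reaches step (config 0 d) (config 0 (\<lambda>j. if j < m then b - 1 else d j))"
  using assms
proof (induction m arbitrary: d)
  case 0
  then show ?case
    by (simp add: reaches_refl)
next
  case (Suc m)
  note fill_below = Suc.IH
  have m: "m < P - 1"
    using Suc.prems(1) by simp
  have lt: "\<forall>j<P - 1. d j < b" and zero: "\<forall>j<Suc m. d j = 0"
    using Suc.prems(2,3) by (simp_all add: valid_config_0)
  let ?fill = "\<lambda>c j. if j < m then b - 1 else if j = m then c else d j"
  have raise: "reaches step (config 0 d) (config 0 (?fill c))" if "c \<le> b - 1" for c
    using that
  proof (induction c)
    case 0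
    have "?fill 0 = (\<lambda>j. if j < m then b - 1 else d j)"
      using zero by auto
    then show ?case
      using fill_below[of d] m Suc.prems zero by simp
  next
    case (Suc c)
    have valid_fill: "valid_config 0 (?fill c)"
      using lt Suc.prems base_ge_2 by (auto simp: valid_config_0)
    have valid_bump: "valid_config 0 (bump m (?fill c))"
      using lt Suc.prems base_ge_2 by (auto simp: valid_config_0 bump_def)
    have "reaches step (config 0 d) (config 0 (?fill c))"
      using Suc.IH Suc.prems by simp
    also have "reaches step (config 0 (?fill c)) (config 0 (bump m (?fill c)))"
      using m valid_fill Suc.prems by (intro reaches_bump) auto
    also have "reaches step (config 0 (bump m (?fill c)))
        (config 0 (\<lambda>j. if j < m then b - 1 else bump m (?fill c) j))"
      by (rule fill_below[OF _ valid_bump]) (use m in \<open>auto simp: bump_def\<close>)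
    also have "(\<lambda>j. if j < m then b - 1 else bump m (?fill c) j) = ?fill (Suc c)"
      by (auto simp: bump_def)
    finally show ?case .
  qed
  have "?fill (b - 1) = (\<lambda>j. if j < Suc m then b - 1 else d j)"
    by auto
  then show ?case
    using raise[of "b - 1"] by simp
qed

lemma maps_to_overflow:
  assumes "d (P - 2) = b" and "\<forall>j<P - 2. d j = 0"
  shows "maps_to step (config 1 d) [2, 0] (reset_state ` {1..P - 1})"
proof -
  have "maps_to step (config 1 d) [2, 0] (insert (reset_state 1) ((\<lambda>j. reset_state (Suc j)) ` {..<P - 1}))"
    unfolding config_def
  proof (rule maps_to_insert)
    have "run step (digit_state 1 d j) [2, 0] = Some (reset_state (Suc j))" if "j < P - 1" for j
    proof (cases "j = P - 2")
      case True
      then have "digit_state 1 d j = Carry" and "Suc j = P - 1"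
        using assms(1) cells_ge_2 by (simp_all add: digit_state_def)
      then show ?thesis
        by simp
    next
      case False
      then have "digit_state 1 d j = Cell (Suc (Suc j)) 0"
        using that assms(2) base_ge_2 by (simp add: digit_state_def cell_of_def)
      then show ?thesis
        by simp
    qed
    then show "maps_to step (digit_state 1 d ` {..<P - 1}) [2, 0] ((\<lambda>j. reset_state (Suc j)) ` {..<P - 1})"
      by (intro maps_to_image) simp
  qed (simp add: reset_state_def)
  moreover have "reset_state ` {1..P - 1} = (\<lambda>j. reset_state (Suc j)) ` {..<P - 1}"
    unfolding image_Suc_lessThan[symmetric] image_image ..
  moreover have "reset_state 1 \<in> reset_state ` {1..P - 1}"
    using cells_ge_2 by simp
  ultimately show ?thesis
    by (simp add: insert_absorb)
qed

lemma maps_to_collapse: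
  assumes "1 \<le> m"
  shows "maps_to step (reset_state ` {1..Suc m}) [2, 0] (reset_state ` {1..m})"
proof -
  have "reset_state ` {1..Suc m} = reset_state ` insert 1 (Suc ` {1..m})"
    by (rule arg_cong[where f = "image reset_state"]) auto
  also have "\<dots> = insert (reset_state 1) ((\<lambda>p. reset_state (Suc p)) ` {1..m})"
    by (simp only: image_insert image_image)
  finally have "reset_state ` {1..Suc m} = insert (reset_state 1) ((\<lambda>p. reset_state (Suc p)) ` {1..m})" .
  moreover have "maps_to step (insert (reset_state 1) ((\<lambda>p. reset_state (Suc p)) ` {1..m})) [2, 0]
      (insert (reset_state 1) (reset_state ` {1..m}))"
  proof (rule maps_to_insert)
    show "run step (reset_state 1) [2, 0] = Some (reset_state 1)"
      by (simp add: reset_state_def)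
    show "maps_to step ((\<lambda>p. reset_state (Suc p)) ` {1..m}) [2, 0] (reset_state ` {1..m})"
      by (rule maps_to_image) (auto simp: reset_state_def)
  qed
  moreover have "insert (reset_state 1) (reset_state ` {1..m}) = reset_state ` {1..m}"
    using assms by auto
  ultimately show ?thesis
    by simp
qed

lemma reaches_collapse: "1 \<le> m \<Longrightarrow> reaches step (reset_state ` {1..m}) {Cell 1 b}"
proof (induction m rule: nat_induct_at_least)
  case base
  then show ?case
    using reaches_refl by (simp add: reset_state_def)
next
  case (Suc m)
  then show ?case
    using maps_to_collapse reachesI reaches_trans by blast
qed

lemma reaches_sync: "reaches step states {Cell 1 b}"
proof -
  let ?full = "\<lambda>j. if j < P - 1 then b - 1 else 0"
  have valid_full: "valid_config 0 ?full"
    using base_ge_2 by (simp add: valid_config_0)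
  have overflow: "maps_to step (config 1 (bump (P - 2) ?full)) [2, 0] (reset_state ` {1..P - 1})"
    by (rule maps_to_overflow) (use base_ge_2 cells_ge_2 in \<open>auto simp: bump_def\<close>)
  have "reaches step states (config 1 (\<lambda>_. 0))"
    using maps_to_reset_states by (rule reachesI)
  also have "reaches step (config 1 (\<lambda>_. 0)) (config 0 (\<lambda>_. 0))"
    using maps_to_rotate[OF valid_initial] base_ge_2 by (auto simp: cyc_pred_def intro: reachesI)
  also have "reaches step (config 0 (\<lambda>_. 0)) (config 0 ?full)"
    using reaches_count_up[of "P - 1" "\<lambda>_. 0"] base_ge_2 by (simp add: valid_config_0)
  also have "reaches step (config 0 ?full) (config 1 (bump (P - 2) ?full))"
    using reaches_carry_chain[of "P - 2" ?full] valid_full cells_ge_2 by simp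
  also have "reaches step (config 1 (bump (P - 2) ?full)) (reset_state ` {1..P - 1})"
    using overflow by (rule reachesI)
  also have "reaches step (reset_state ` {1..P - 1}) {Cell 1 b}"
    using reaches_collapse cells_ge_2 by simp
  finally show ?thesis .
qed

theorem car_ge: "P * b ^ (P - 1) + 3 \<le> car (P * (b + 1) + 2 + pad) 3"
proof -
  obtain w where "maps_to step states w {Cell 1 b}"
    using reaches_sync by (auto simp: reaches_def)
  then have sync: "\<forall>x\<in>states. run step x w = Some (Cell 1 b)"
    by (rule maps_to_singleton)
  show ?thesis
  proof (rule car_ge_model)
    show "finite states"
      by (simp add: states_def)
    show "card states = P * (b + 1) + 2 + pad"
      by (rule card_states)
    show "Idle \<in> states"
      by simp
    show "y \<in> states" if "x \<in> states" and "step x a = Some y" for x a y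
      using that by (rule step_states)
    show "a < 3" if "step x a \<noteq> None" for x a
      using that by (rule step_letters)
    show "\<forall>x\<in>states. run step x w = Some (Cell 1 b)"
      by (fact sync)
    show "P * b ^ (P - 1) + 3 \<le> length w'" if "\<forall>x\<in>states. run step x w' = Some y" for w' y
      using that by (rule sync_states_length)
  qed
qed

end

lemma car_odometer:
  assumes "2 \<le> b" and "2 \<le> P"
  shows "P * b ^ (P - 1) + 3 \<le> car (P * (b + 1) + 2 + pad) 3"
proof -
  interpret odometer b P pad
    by (simp add: odometer_def assms)
  show ?thesis
    by (rule car_ge)
qed

theorem theorem2:
  fixes n k :: nat
  assumes "k \<ge> 1" and "n = 5 * k + 4"
  shows "4 ^ ((n - 4) div 5) \<le> car n 3"
proof -
  have "(n - 4) div 5 = k"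
    using assms(2) by simp
  (* Base 4 has five states per cell, matching n = 5k + 4, but is long enough only from k = 4 on;
     smaller k use binary counters with padding. *)
  moreover consider "k = 1" | "k = 2" | "k = 3" | "4 \<le> k"
    using assms(1) by linarith
  then have "4 ^ k \<le> car n 3"
  proof cases
    case 4
    have size: "k * (4 + 1) + 2 + 2 = n"
      using assms(2) by simp
    have "4 ^ k = 4 * 4 ^ (k - 1)"
      using 4 by (simp add: power_eq_if)
    also have "\<dots> \<le> k * 4 ^ (k - 1)"
      using 4 by simp
    also have "\<dots> \<le> car n 3"
      using car_odometer[of 4 k 2] 4 unfolding size by simp
    finally show ?thesis .
  qed (use car_odometer[of 2 2 1] car_odometer[of 2 4 0] car_odometer[of 2 5 2] assms(2) in simp_all)
  ultimately show ?thesis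
    by simp
qed

end
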